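(* The function $s \mapsto s\,\dfrac{\theta_3'(s)}{\theta_3(s)}$ is strictly increasing on $[1,\infty)$.
   Context: For $s>0$, $\theta_3(s) = \sum_{k\in\mathbb{Z}} e^{-\pi k^2 s}$. *)

theory Defs
  imports "HOL-Analysis.Analysis"
begin

definition theta3 :: "real \<Rightarrow> real" where
  "theta3 s = (\<Sum>\<^sub>\<infinity>k::int. exp (- pi * (real_of_int k)\<^sup>2 * s))"

end

theory Submission
  imports Defs "HOL-Real_Asymp.Real_Asymp"
begin

text \<open>Write theta3 = 1 + 2 S_0 with S_m(s) = sum_{n >= 1} n^m exp(-pi n^2 s) (here theta_moment m s).
  Termwise differentiation gives S_m' = -pi S_{m+2}, so s theta3'/theta3 = -2 pi s S_2 / (1 + 2 S_0),
  whose derivative has the sign of pi s (S_4 (1 + 2 S_0) - 2 S_2^2) - S_2 (1 + 2 S_0).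
  For s >= 1 the term n = 1 dominates: with q = exp(-pi s) <= 1/10 the rest of S_m, m <= 4, is bounded
  by a rapidly decaying geometric series, so S_m lies in [q, 6q/5]. Then the first summand is at least
  3 * 9q/10, which beats the second one, at most 6q/5 (1 + 12q/5).\<close>

lemma has_sum_int_symmetric:
  fixes f :: "int \<Rightarrow> 'a::topological_comm_monoid_add"
  assumes pos: "((\<lambda>n. f (int n + 1)) has_sum S) UNIV" and even: "\<And>k. f (- k) = f k"
  shows "(f has_sum (f 0 + (S + S))) UNIV"
proof -
  have P: "(f has_sum S) {0<..}"
    using pos by (subst has_sum_reindex_bij_witness[where i = "\<lambda>k. nat (k - 1)" and j = "\<lambda>n. int n + 1"
        and S = UNIV and g = "\<lambda>n. f (int n + 1)", symmetric]) auto
  have N: "(f has_sum S) {..<0}"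
    using pos by (subst has_sum_reindex_bij_witness[where i = "\<lambda>k. nat (- k - 1)" and j = "\<lambda>n. - int n - 1"
        and S = UNIV and g = "\<lambda>n. f (int n + 1)", symmetric]) (auto simp: even[of "int _ + 1", symmetric])
  have "(f has_sum (f 0 + (S + S))) (insert 0 ({0<..} \<union> {..<0}))"
    by (intro has_sum_insert has_sum_Un_disjoint P N) auto
  also have "insert 0 ({0<..} \<union> {..<0::int}) = UNIV" by auto
  finally show ?thesis .
qed

definition theta_moment :: "nat \<Rightarrow> real \<Rightarrow> real" where
  "theta_moment m s = (\<Sum>n. (real n + 1) ^ m * exp (- pi * (real n + 1)\<^sup>2 * s))"

lemma summable_power_times_exp_neg_square:
  assumes "c > 0"
  shows "summable (\<lambda>n::nat. (real n + 1) ^ k * exp (- c * (real n + 1)\<^sup>2))"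
proof (rule summable_comparison_test_bigo)
  show "summable (\<lambda>n. norm (1 / real n ^ 2))"
    using inverse_power_summable[of 2, where 'a=real] by (simp add: divide_inverse)
  show "(\<lambda>n::nat. (real n + 1) ^ k * exp (- c * (real n + 1)\<^sup>2)) \<in> O(\<lambda>n. 1 / real n ^ 2)"
    using assms by real_asymp
qed

lemma summable_theta_moment:
  assumes "s > 0"
  shows "summable (\<lambda>n. (real n + 1) ^ m * exp (- pi * (real n + 1)\<^sup>2 * s))"
  using summable_power_times_exp_neg_square[of "pi * s" m] assms by (simp add: algebra_simps)

lemma has_field_derivative_theta_moment:
  assumes "s > 0"
  shows "(theta_moment m has_field_derivative - pi * theta_moment (m + 2) s) (at s)"
proof -
  define f where "f n x = (real n + 1) ^ m * exp (- pi * (real n + 1)\<^sup>2 * x)" for n x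
  define f' where "f' n x = - pi * ((real n + 1) ^ (m + 2) * exp (- pi * (real n + 1)\<^sup>2 * x))" for n x
  have der: "(f n has_field_derivative f' n x) (at x within {s/2<..})" for n x
    unfolding f_def f'_def by (auto intro!: derivative_eq_intros simp: power_add power2_eq_square)
  have unif: "uniformly_convergent_on {s/2<..} (\<lambda>n x. \<Sum>i<n. f' i x)"
  proof (rule Weierstrass_m_test')
    show "norm (f' n x) \<le> pi * ((real n + 1) ^ (m + 2) * exp (- pi * (real n + 1)\<^sup>2 * (s/2)))"
      if "x \<in> {s/2<..}" for n x
      using that unfolding f'_def by (auto simp: abs_mult intro!: mult_left_mono)
    show "summable (\<lambda>n. pi * ((real n + 1) ^ (m + 2) * exp (- pi * (real n + 1)\<^sup>2 * (s/2))))"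
      by (intro summable_mult summable_theta_moment) (use assms in simp)
  qed
  have "summable (\<lambda>n. f n s)" unfolding f_def by (rule summable_theta_moment[OF assms])
  from has_field_derivative_series'(2)[OF convex_real_interval(3) der unif _ this, of s]
  have "((\<lambda>x. \<Sum>n. f n x) has_field_derivative (\<Sum>n. f' n s)) (at s)"
    using assms by (simp add: interior_open)
  moreover have "(\<Sum>n. f' n s) = - pi * theta_moment (m + 2) s"
    unfolding f'_def theta_moment_def by (rule suminf_mult[OF summable_theta_moment[OF assms]])
  ultimately show ?thesis by (simp add: f_def theta_moment_def[abs_def])
qed

lemma theta3_eq_theta_moment:
  assumes "s > 0"
  shows "theta3 s = 1 + 2 * theta_moment 0 s"
proof -
  have "((\<lambda>n. exp (- pi * (real n + 1)\<^sup>2 * s)) has_sum theta_moment 0 s) UNIV"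
    using summable_theta_moment[OF assms, of 0]
    by (intro sums_nonneg_imp_has_sum) (auto simp: theta_moment_def summable_sums)
  then have "((\<lambda>k::int. exp (- pi * (real_of_int k)\<^sup>2 * s)) has_sum
      (exp (- pi * (real_of_int 0)\<^sup>2 * s) + (theta_moment 0 s + theta_moment 0 s))) UNIV"
    by (intro has_sum_int_symmetric) (simp_all add: add.commute)
  then show ?thesis unfolding theta3_def by (auto dest: infsumI)
qed

lemma deriv_theta3:
  assumes "s > 0"
  shows "deriv theta3 s = - 2 * pi * theta_moment 2 s"
proof -
  have "(theta_moment 0 has_field_derivative - pi * theta_moment 2 s) (at s)"
    using has_field_derivative_theta_moment[OF assms, of 0] by (simp add: numeral_2_eq_2)
  then have "((\<lambda>s. 1 + 2 * theta_moment 0 s) has_field_derivative 2 * (- pi * theta_moment 2 s)) (at s)"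
    by (auto intro!: derivative_eq_intros)
  then have "(theta3 has_field_derivative 2 * (- pi * theta_moment 2 s)) (at s)"
    by (rule has_field_derivative_transform_within_open[where S = "{0<..}"])
      (use assms theta3_eq_theta_moment in auto)
  then show ?thesis by (simp add: DERIV_imp_deriv)
qed

lemma theta_log_deriv_eq:
  assumes "s > 0"
  shows "s * deriv theta3 s / theta3 s = - 2 * pi * (s * theta_moment 2 s / (1 + 2 * theta_moment 0 s))"
  using assms by (simp add: deriv_theta3 theta3_eq_theta_moment)

lemma has_real_derivative_theta_moment_quotient:
  assumes "s > 0"
  defines "S m \<equiv> theta_moment m s"
  shows "((\<lambda>s. - 2 * pi * (s * theta_moment 2 s / (1 + 2 * theta_moment 0 s))) has_real_derivative
    2 * pi * ((pi * s * (S 4 * (1 + 2 * S 0) - 2 * (S 2)\<^sup>2) - S 2 * (1 + 2 * S 0)) / (1 + 2 * S 0)\<^sup>2)) (at s)"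
proof -
  have S0: "(theta_moment 0 has_field_derivative - pi * theta_moment 2 s) (at s)"
    using has_field_derivative_theta_moment[OF assms(1), of 0] by (simp add: numeral_2_eq_2)
  have S2: "(theta_moment 2 has_field_derivative - pi * theta_moment 4 s) (at s)"
    using has_field_derivative_theta_moment[OF assms(1), of 2] by simp
  have "theta_moment 0 s \<ge> 0"
    unfolding theta_moment_def
    by (intro suminf_nonneg) (use summable_theta_moment[OF assms(1), of 0] in auto)
  then have "1 + 2 * theta_moment 0 s \<noteq> 0" by linarith
  note quotient_rule = DERIV_quotient[OF DERIV_mult[OF DERIV_ident S2] DERIV_add[OF DERIV_const DERIV_cmult[OF S0]] this]
  show ?thesis
    unfolding S_def
    by (rule DERIV_cong[OF DERIV_cmult[OF quotient_rule]])
      (simp add: numeral_2_eq_2 diff_divide_distrib add_divide_distrib algebra_simps)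
qed

lemma exp_neg_pi_le: "exp (- pi) \<le> 1 / 10"
proof -
  have "(10::real) \<le> (27/10) ^ 3" by (simp add: power3_eq_cube)
  also have "\<dots> \<le> exp 1 ^ 3"
    using e_approx_32 by (intro power_mono) (auto simp: abs_if split: if_splits)
  also have "\<dots> = exp 3" by (simp flip: exp_of_nat_mult)
  also have "\<dots> \<le> exp pi" using pi_gt3 by simp
  finally show ?thesis by (simp add: exp_minus field_simps)
qed

lemma exp_neg_pi_square_le:
  fixes s :: real and n :: nat
  assumes "s \<ge> 1"
  shows "exp (- pi * (real n + 2)\<^sup>2 * s) \<le> exp (- pi * s) * (1 / 10) ^ (4 * n + 3)"
proof -
  have "real (4 * n + 3) \<le> (real n + 2)\<^sup>2 - 1" by (simp add: power2_eq_square algebra_simps)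
  also have "\<dots> \<le> ((real n + 2)\<^sup>2 - 1) * s"
    using mult_left_mono[OF assms, of "(real n + 2)\<^sup>2 - 1"] one_le_power[of "real n + 2" 2] by simp
  finally have "exp (- pi * ((real n + 2)\<^sup>2 - 1) * s) \<le> exp (real (4 * n + 3) * - pi)"
    by (simp add: mult.assoc)
  also have "\<dots> = exp (- pi) ^ (4 * n + 3)" by (rule exp_of_nat_mult)
  also have "\<dots> \<le> (1 / 10) ^ (4 * n + 3)" by (intro power_mono exp_neg_pi_le) simp
  finally have "exp (- pi * ((real n + 2)\<^sup>2 - 1) * s) \<le> (1 / 10) ^ (4 * n + 3)" .
  moreover have "exp (- pi * (real n + 2)\<^sup>2 * s) = exp (- pi * s) * exp (- pi * ((real n + 2)\<^sup>2 - 1) * s)"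
    by (simp add: algebra_simps flip: exp_add)
  ultimately show ?thesis by simp
qed

lemma poly_le_exponential:
  fixes n m :: nat
  assumes "m \<le> 4"
  shows "(real n + 2) ^ m \<le> 16 * 16 ^ n"
proof -
  have "n + 1 \<le> (2::nat) ^ n" using less_exp[of n] by (simp add: Suc_le_eq)
  then have "real n + 1 \<le> 2 ^ n" by (metis of_nat_1 of_nat_add of_nat_le_iff of_nat_numeral of_nat_power)
  then have "real n + 2 \<le> 2 * 2 ^ n" using one_le_power[of "2::real" n] by simp
  have "(real n + 2) ^ m \<le> (real n + 2) ^ 4" using assms by (intro power_increasing) auto
  also have "\<dots> \<le> (2 * 2 ^ n) ^ 4" using \<open>real n + 2 \<le> 2 * 2 ^ n\<close> by (rule power_mono) simp
  also have "\<dots> = 16 * 2 ^ (4 * n)" by (simp add: power_mult_distrib mult.commute flip: power_mult)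
  also have "\<dots> = 16 * 16 ^ n" by (simp add: power_mult)
  finally show ?thesis .
qed

lemma theta_moment_tail_term_le:
  assumes "s \<ge> 1" "m \<le> 4"
  shows "(real n + 2) ^ m * exp (- pi * (real n + 2)\<^sup>2 * s) \<le> exp (- pi * s) * (16 / 1000) * (16 / 10000) ^ n"
proof -
  have "(real n + 2) ^ m * exp (- pi * (real n + 2)\<^sup>2 * s)
      \<le> (16 * 16 ^ n) * (exp (- pi * s) * (1 / 10) ^ (4 * n + 3))"
    using poly_le_exponential[OF assms(2)] exp_neg_pi_square_le[OF assms(1)] by (intro mult_mono) auto
  also have "\<dots> = exp (- pi * s) * (16 / 1000) * (16 ^ n * (1 / 10000) ^ n)"
    by (simp add: power_add power_mult power_divide)
  also have "\<dots> = exp (- pi * s) * (16 / 1000) * (16 / 10000) ^ n"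
    by (simp add: power_mult_distrib[symmetric])
  finally show ?thesis .
qed

lemma theta_moment_bounds:
  assumes "s \<ge> 1" "m \<le> 4"
  shows "exp (- pi * s) \<le> theta_moment m s" "theta_moment m s \<le> 6 / 5 * exp (- pi * s)"
proof -
  let ?f = "\<lambda>n. (real n + 1) ^ m * exp (- pi * (real n + 1)\<^sup>2 * s)"
  let ?q = "exp (- pi * s)"
  have sf: "summable ?f" by (rule summable_theta_moment) (use assms in auto)
  then have tail: "summable (\<lambda>n. ?f (Suc n))" by (subst summable_Suc_iff)
  have split: "theta_moment m s = ?q + (\<Sum>n. ?f (Suc n))"
    unfolding theta_moment_def suminf_split_head[OF sf] by simp
  have "0 \<le> (\<Sum>n. ?f (Suc n))" by (intro suminf_nonneg tail) auto
  then show "?q \<le> theta_moment m s" using split by simp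
  have "(\<Sum>n. ?f (Suc n)) \<le> (\<Sum>n. ?q * (16 / 1000) * (16 / 10000) ^ n)"
  proof (intro suminf_le tail summable_mult summable_geometric)
    fix n
    have "real (Suc n) + 1 = real n + 2" by simp
    then show "?f (Suc n) \<le> ?q * (16 / 1000) * (16 / 10000) ^ n"
      using theta_moment_tail_term_le[OF assms, of n] by (simp only:)
  qed simp
  also have "\<dots> = ?q * (16 / 1000) * (10000 / 9984)"
    by (subst suminf_mult) (auto simp: suminf_geometric)
  finally show "theta_moment m s \<le> 6 / 5 * ?q" using split exp_gt_zero[of "- pi * s"] by linarith
qed

lemma dominant_term_inequality:
  fixes q a0 a2 a4 s :: real
  assumes q: "0 < q" "q \<le> 1 / 10" and s: "s \<ge> 1"
    and a: "q \<le> a0" "a0 \<le> 6/5 * q" "q \<le> a2" "a2 \<le> 6/5 * q" "q \<le> a4" "a4 \<le> 6/5 * q"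
  shows "a2 * (1 + 2 * a0) < pi * s * (a4 * (1 + 2 * a0) - 2 * a2\<^sup>2)"
proof -
  have "q * (1 + 2 * q) \<le> a4 * (1 + 2 * a0)" using a q by (intro mult_mono) auto
  moreover have "q * (1 + 2 * q) = q + 2 * q\<^sup>2" by (simp add: power2_eq_square algebra_simps)
  moreover have "a2\<^sup>2 \<le> (6/5 * q)\<^sup>2" using a q by (intro power_mono) auto
  moreover have "(6/5 * q)\<^sup>2 = 36/25 * q\<^sup>2" by (simp add: power2_eq_square)
  moreover have "q\<^sup>2 \<le> q / 10" using q by (simp add: power2_eq_square mult_left_mono)
  ultimately have "9/10 * q \<le> a4 * (1 + 2 * a0) - 2 * a2\<^sup>2" using q by linarith
  moreover have "pi * 1 \<le> pi * s" using s by (intro mult_left_mono) auto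
  then have "3 \<le> pi * s" using pi_gt3 by linarith
  ultimately have "3 * (9/10 * q) \<le> pi * s * (a4 * (1 + 2 * a0) - 2 * a2\<^sup>2)"
    using q by (intro mult_mono) auto
  moreover have "a2 * (1 + 2 * a0) \<le> 6/5 * q * (1 + 2 * (6/5 * q))"
    using a q by (intro mult_mono) auto
  moreover have "6/5 * q * (1 + 2 * (6/5 * q)) < 3 * (9/10 * q)"
    using q by (simp add: algebra_simps)
  ultimately show ?thesis by linarith
qed

lemma strict_mono_on_theta_moment_quotient:
  "strict_mono_on {1..} (\<lambda>s. - 2 * pi * (s * theta_moment 2 s / (1 + 2 * theta_moment 0 s)))"
proof (rule strict_mono_onI)
  fix r t :: real assume "r \<in> {1..}" "t \<in> {1..}" "r < t"
  show "- 2 * pi * (r * theta_moment 2 r / (1 + 2 * theta_moment 0 r))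
      < - 2 * pi * (t * theta_moment 2 t / (1 + 2 * theta_moment 0 t))"
  proof (rule DERIV_pos_imp_increasing[OF \<open>r < t\<close>])
    fix s assume "r \<le> s" "s \<le> t"
    with \<open>r \<in> {1..}\<close> have s: "s \<ge> 1" by simp
    have "pi * 1 \<le> pi * s" using s by (intro mult_left_mono) auto
    then have "exp (- pi * s) \<le> exp (- pi)" by simp
    then have q: "0 < exp (- pi * s)" "exp (- pi * s) \<le> 1 / 10"
      using exp_neg_pi_le by (simp, linarith)
    note bounds = theta_moment_bounds[OF s, of 0] theta_moment_bounds[OF s, of 2] theta_moment_bounds[OF s, of 4]
    let ?D = "1 + 2 * theta_moment 0 s"
    let ?y = "2 * pi * ((pi * s * (theta_moment 4 s * ?D - 2 * (theta_moment 2 s)\<^sup>2) - theta_moment 2 s * ?D) / ?D\<^sup>2)"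
    have "0 < ?D" using bounds q by linarith
    then have "0 < ?y"
      using dominant_term_inequality[OF q s bounds] by (intro mult_pos_pos divide_pos_pos) auto
    with has_real_derivative_theta_moment_quotient[of s] s
    show "\<exists>y. DERIV (\<lambda>s. - 2 * pi * (s * theta_moment 2 s / (1 + 2 * theta_moment 0 s))) s :> y \<and> 0 < y"
      by (intro exI[of _ ?y]) simp
  qed
qed

theorem mainTheorem10:
  shows "strict_mono_on {1..} (\<lambda>s::real. s * deriv theta3 s / theta3 s)"
  using strict_mono_on_theta_moment_quotient by (simp add: strict_mono_on_def theta_log_deriv_eq)

end
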